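(* Consider the multi-market oligopoly of equal capacity $\mathcal{G}$ described in the context, and suppose: each $u_x$ ($x\in E$) is concave and differentiable; $c$ is convex and differentiable; and at least one of the following holds: (a) all but at most one of the $u_x$ are strictly concave, or (b) $c$ is strictly convex. Then $\mathcal{G}$ has a unique pure-strategy Nash equilibrium $\mathbf{S}^*=(\mathbf{s}_i^* )_{i=1}^n$; it is symmetric ($\mathbf{s}_i^*=\mathbf{s}^*/n$ for all $i$), and its aggregate strategy $\mathbf{s}^*=\sum_{i=1}^n\mathbf{s}_i^*$ is the (unique) maximizer over $n\Delta^{m-1}$ of the potential function $$\Phi(\mathbf{s})=\sum_{x=1}^m\left[\left(1-\frac1n\right)\int_0^{s_x}\frac{u_x(t)}{t}\,\mathrm{d}t+\frac1n u_x(s_x)\right]-n\,c(\mathbf{s}/n).$$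
   Context: Let $N=\{1,\dots,n\}$ be a set of firms (players) and $E=\{1,\dots,m\}$ a set of markets. Let $\Delta^{m-1}=\{\mathbf{v}\in\mathbb{R}^m:\mathbf{v}\ge 0,\ \mathbf{v}^{T}\mathbf{1}=1\}$ and $n\Delta^{m-1}=\{\mathbf{s}\ge 0:\sum_x s_x=n\}$. Each firm $i$ chooses a strategy $\mathbf{s}_i=(s_{ix})_{x=1}^m\in S_i=\Delta^{m-1}$. For each market $x$ let $u_x:\mathbb{R}_{\ge 0}\to\mathbb{R}_{\ge 0}$ with $u_x(0)=0$, and let $p_x(t)=u_x(t)/t$ for $t>0$. Let $c:\Delta^{m-1}\to\mathbb{R}_{\ge 0}$ be a common cost function. For a strategy profile $\mathbf{S}=(\mathbf{s}_i)_{i=1}^n$ put $s_x=\sum_{i=1}^n s_{ix}$ and $\mathbf{s}_{-i}=\sum_{j\ne i}\mathbf{s}_j$. The payoff of player $i$ is $u_i(\mathbf{s}_i;\mathbf{s}_{-i})=\sum_{x=1}^m p_x(s_x)s_{ix}-c(\mathbf{s}_i)$ (a term with $s_x=0$ is taken to be $0$). The game is $\mathcal{G}=(N,S,(u_i)_{i=1}^n)$ with $S=\prod_{i=1}^n\Delta^{m-1}$. *)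

theory Defs
  imports "HOL-Analysis.Analysis"
begin

text \<open>Markets are the elements of a finite type 'e (so m = CARD('e) \<ge> 1);
  strategies are vectors in real^'e. Players are 1..n.\<close>

definition strictly_convex_on :: "'a::real_vector set \<Rightarrow> ('a \<Rightarrow> real) \<Rightarrow> bool" where
  "strictly_convex_on S f \<longleftrightarrow> convex S \<and>
     (\<forall>x\<in>S. \<forall>y\<in>S. x \<noteq> y \<longrightarrow>
        (\<forall>t::real. 0 < t \<and> t < 1 \<longrightarrow> f ((1 - t) *\<^sub>R x + t *\<^sub>R y) < (1 - t) * f x + t * f y))"

definition strictly_concave_on :: "'a::real_vector set \<Rightarrow> ('a \<Rightarrow> real) \<Rightarrow> bool" where
  "strictly_concave_on S f \<longleftrightarrow> strictly_convex_on S (\<lambda>x. - f x)"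

definition unit_simplex :: "(real^'e::finite) set" where
  "unit_simplex = {v. (\<forall>x. 0 \<le> v $ x) \<and> (\<Sum>x\<in>UNIV. v $ x) = 1}"

definition scaled_simplex :: "nat \<Rightarrow> (real^'e::finite) set" where
  "scaled_simplex n = {s. (\<forall>x. 0 \<le> s $ x) \<and> (\<Sum>x\<in>UNIV. s $ x) = real n}"

definition aggregate :: "nat \<Rightarrow> (nat \<Rightarrow> real^'e::finite) \<Rightarrow> real^'e" where
  "aggregate n S = (\<Sum>i\<in>{1..n}. S i)"

text \<open>p_x(t) = u_x(t)/t; in Isabelle t/0 = 0, which realizes the convention that
  a term with s_x = 0 is 0.\<close>
definition price :: "('e \<Rightarrow> real \<Rightarrow> real) \<Rightarrow> 'e \<Rightarrow> real \<Rightarrow> real" where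
  "price u x t = u x t / t"

definition payoff ::
  "('e::finite \<Rightarrow> real \<Rightarrow> real) \<Rightarrow> (real^'e \<Rightarrow> real) \<Rightarrow> nat \<Rightarrow> (nat \<Rightarrow> real^'e) \<Rightarrow> nat \<Rightarrow> real" where
  "payoff u c n S i =
     (\<Sum>x\<in>UNIV. price u x (aggregate n S $ x) * (S i $ x)) - c (S i)"

definition is_pure_NE ::
  "('e::finite \<Rightarrow> real \<Rightarrow> real) \<Rightarrow> (real^'e \<Rightarrow> real) \<Rightarrow> nat \<Rightarrow> (nat \<Rightarrow> real^'e) \<Rightarrow> bool" where
  "is_pure_NE u c n S \<longleftrightarrow>
     (\<forall>i\<in>{1..n}. S i \<in> unit_simplex) \<and>
     (\<forall>i\<in>{1..n}. \<forall>t\<in>unit_simplex. payoff u c n (S(i := t)) i \<le> payoff u c n S i)"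

definition potential ::
  "('e::finite \<Rightarrow> real \<Rightarrow> real) \<Rightarrow> (real^'e \<Rightarrow> real) \<Rightarrow> nat \<Rightarrow> real^'e \<Rightarrow> real" where
  "potential u c n s =
     (\<Sum>x\<in>UNIV. (1 - 1 / real n) * integral {0 .. s $ x} (\<lambda>t. u x t / t)
                 + (1 / real n) * u x (s $ x))
     - real n * c ((1 / real n) *\<^sub>R s)"

end

theory Submission
  imports Defs
begin

text \<open>A firm supplying \<open>a\<close> to a market where the other firms supply \<open>b\<close> earns
  \<open>u (a + b) / (a + b) * a\<close>, which is concave in \<open>a\<close>; so equilibria are characterised by
  first-order conditions. Adding the first-order conditions of two firms playing \<open>A\<close> and \<open>B\<close>,
  the market terms sum to \<open>\<Sum>x. (A x - B x)\<^sup>2 (p x (s x) - u x' (s x)) / s x \<ge> 0\<close> while the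
  cost terms are \<open>\<le> 0\<close> by convexity of \<open>c\<close>; either strictness hypothesis then forces \<open>A = B\<close>.
  If every firm plays \<open>v\<close>, the derivative of \<open>v \<mapsto> \<Phi> (n v)\<close> is \<open>n\<close> times the derivative
  of the payoff of a deviating firm, and both functions are concave, so \<open>v\<close> is a best reply to
  itself iff it maximises \<open>\<Phi> (n v)\<close> on the simplex. That function is continuous and strictly
  concave on the compact simplex, so it has exactly one maximiser.\<close>

section \<open>Convex functions and derivatives\<close>

lemma strictly_convex_onD:
  assumes "strictly_convex_on S f" "x \<in> S" "y \<in> S" "x \<noteq> y" "0 < t" "t < 1"
  shows "f ((1 - t) *\<^sub>R x + t *\<^sub>R y) < (1 - t) * f x + t * f y"
  using assms unfolding strictly_convex_on_def by blast

lemma strictly_concave_onD: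
  assumes "strictly_concave_on S f" "x \<in> S" "y \<in> S" "x \<noteq> y" "0 < t" "t < 1"
  shows "(1 - t) * f x + t * f y < f ((1 - t) *\<^sub>R x + t *\<^sub>R y)"
  using strictly_convex_onD[of S "\<lambda>z. - f z" x y t] assms by (simp add: strictly_concave_on_def)

lemma strictly_concave_onI:
  assumes "convex S"
    and "\<And>x y t. x \<in> S \<Longrightarrow> y \<in> S \<Longrightarrow> x \<noteq> y \<Longrightarrow> 0 < t \<Longrightarrow> t < 1 \<Longrightarrow>
      (1 - t) * f x + t * f y < f ((1 - t) *\<^sub>R x + t *\<^sub>R y)"
  shows "strictly_concave_on S f"
  using assms unfolding strictly_concave_on_def strictly_convex_on_def by fastforce

lemma strictly_convex_on_imp_convex_on:
  assumes "strictly_convex_on S f"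
  shows "convex_on S f"
proof (rule convex_onI)
  fix t :: real and x y assume "0 < t" "t < 1" "x \<in> S" "y \<in> S"
  then show "f ((1 - t) *\<^sub>R x + t *\<^sub>R y) \<le> (1 - t) * f x + t * f y"
    using strictly_convex_onD[OF assms] by (cases "x = y") (auto simp: algebra_simps intro: less_imp_le)
qed (use assms in \<open>simp add: strictly_convex_on_def\<close>)

lemma segment_eq_convex_combination:
  fixes x y :: "'a::real_vector"
  shows "x + t *\<^sub>R (y - x) = (1 - t) *\<^sub>R x + t *\<^sub>R y"
  by (simp add: algebra_simps)

lemma has_derivative_along_segment:
  fixes f :: "'a::real_normed_vector \<Rightarrow> real"
  assumes f: "(f has_derivative D) (at x within S)"
    and segment: "\<And>t. t \<in> {0..1} \<Longrightarrow> x + t *\<^sub>R (y - x) \<in> S"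
  shows "((\<lambda>t. f (x + t *\<^sub>R (y - x))) has_real_derivative D (y - x)) (at 0 within {0..1})"
proof -
  let ?p = "\<lambda>t::real. x + t *\<^sub>R (y - x)"
  have p: "(?p has_derivative (\<lambda>h. h *\<^sub>R (y - x))) (at 0 within {0..1})"
    by (auto intro!: derivative_eq_intros)
  have "?p ` {0..1} \<subseteq> S"
    using segment by auto
  then have "(f has_derivative D) (at (?p 0) within ?p ` {0..1})"
    using has_derivative_subset[OF f] by simp
  from has_derivative_in_compose[OF p this]
  have "((\<lambda>t. f (?p t)) has_derivative (\<lambda>h. D (h *\<^sub>R (y - x)))) (at 0 within {0..1})" .
  moreover have "(\<lambda>h. D (h *\<^sub>R (y - x))) = (*) (D (y - x))"
    using linear_cmul[OF has_derivative_linear[OF f]] by auto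
  ultimately show ?thesis
    by (simp add: has_field_derivative_def)
qed

lemma DERIV_le_of_right_slopes_le:
  fixes \<phi> :: "real \<Rightarrow> real"
  assumes "(\<phi> has_real_derivative D) (at 0 within {0..1})"
    and slopes: "\<And>t. 0 < t \<Longrightarrow> t \<le> 1 \<Longrightarrow> \<phi> t - \<phi> 0 \<le> t * K"
  shows "D \<le> K"
proof (rule tendsto_upperbound)
  show "((\<lambda>t. (\<phi> t - \<phi> 0) / (t - 0)) \<longlongrightarrow> D) (at_right 0)"
    using assms(1) by (simp add: has_field_derivative_iff at_within_Icc_at_right)
  have "\<forall>\<^sub>F t in at_right 0. 0 < t \<and> t < (1::real)"
    by (simp add: eventually_at_right_field) (metis zero_less_one)
  then show "\<forall>\<^sub>F t in at_right 0. (\<phi> t - \<phi> 0) / (t - 0) \<le> K"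
    by eventually_elim (use slopes in \<open>auto simp: divide_le_eq mult.commute\<close>)
qed simp

lemma convex_on_above_derivative:
  fixes f :: "'a::real_normed_vector \<Rightarrow> real"
  assumes f: "convex_on S f" and "x \<in> S" "y \<in> S"
    and D: "(f has_derivative D) (at x within S)"
  shows "f x + D (y - x) \<le> f y"
proof -
  have "convex S"
    using f by (rule convex_on_imp_convex)
  have "D (y - x) \<le> f y - f x"
  proof (rule DERIV_le_of_right_slopes_le[OF has_derivative_along_segment[OF D]])
    show "x + t *\<^sub>R (y - x) \<in> S" if "t \<in> {0..1}" for t
      using that \<open>convex S\<close> \<open>x \<in> S\<close> \<open>y \<in> S\<close> by (simp add: segment_eq_convex_combination convex_alt)
  next
    fix t :: real assume "0 < t" "t \<le> 1"
    then have "f ((1 - t) *\<^sub>R x + t *\<^sub>R y) \<le> (1 - t) * f x + t * f y"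
      using convex_onD[OF f] \<open>x \<in> S\<close> \<open>y \<in> S\<close> by simp
    then show "f (x + t *\<^sub>R (y - x)) - f (x + 0 *\<^sub>R (y - x)) \<le> t * (f y - f x)"
      by (simp add: segment_eq_convex_combination algebra_simps)
  qed
  then show ?thesis by simp
qed

lemma strictly_convex_on_above_derivative:
  fixes f :: "'a::real_normed_vector \<Rightarrow> real"
  assumes f: "strictly_convex_on S f" and x: "x \<in> S" and y: "y \<in> S" and "x \<noteq> y"
    and D: "(f has_derivative D) (at x within S)"
  shows "f x + D (y - x) < f y"
proof -
  define m where "m = x + (1/2::real) *\<^sub>R (y - x)"
  have m: "m = (1 - 1/2) *\<^sub>R x + (1/2::real) *\<^sub>R y"
    unfolding m_def by (rule segment_eq_convex_combination)
  have "convex S"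
    using f by (simp add: strictly_convex_on_def)
  then have "m \<in> S"
    using x y by (simp add: m convexD)
  have "f x + D (m - x) \<le> f m"
    by (rule convex_on_above_derivative[OF strictly_convex_on_imp_convex_on[OF f] x \<open>m \<in> S\<close> D])
  moreover have "D (m - x) = (1/2) * D (y - x)"
    using linear_cmul[OF has_derivative_linear[OF D]] by (simp add: m_def)
  moreover have "f m < (1 - 1/2) * f x + (1/2) * f y"
    unfolding m by (rule strictly_convex_onD[OF f x y \<open>x \<noteq> y\<close>]) simp_all
  ultimately show ?thesis
    by simp
qed

lemma has_derivative_maximum_imp_nonpos:
  fixes f :: "'a::real_normed_vector \<Rightarrow> real"
  assumes "convex S" "x \<in> S" "y \<in> S" and D: "(f has_derivative D) (at x within S)"
    and max: "\<And>z. z \<in> S \<Longrightarrow> f z \<le> f x"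
  shows "D (y - x) \<le> 0"
proof -
  have segment: "x + t *\<^sub>R (y - x) \<in> S" if "t \<in> {0..1}" for t :: real
    using that assms(1-3) by (simp add: segment_eq_convex_combination convex_alt)
  show ?thesis
    by (rule DERIV_le_of_right_slopes_le[OF has_derivative_along_segment[OF D segment]])
      (use max segment in auto)
qed

lemma concave_on_maximum_iff_derivative:
  fixes f :: "'a::real_normed_vector \<Rightarrow> real"
  assumes f: "concave_on S f" and x: "x \<in> S" and D: "(f has_derivative D) (at x within S)"
  shows "(\<forall>y\<in>S. f y \<le> f x) \<longleftrightarrow> (\<forall>y\<in>S. D (y - x) \<le> 0)"
proof
  assume "\<forall>y\<in>S. f y \<le> f x"
  then show "\<forall>y\<in>S. D (y - x) \<le> 0"
    using has_derivative_maximum_imp_nonpos[OF concave_on_imp_convex[OF f] x _ D] by blast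
next
  assume nonpos: "\<forall>y\<in>S. D (y - x) \<le> 0"
  have "- f x + - D (y - x) \<le> - f y" if "y \<in> S" for y
    using convex_on_above_derivative[of S "\<lambda>z. - f z", OF _ x that has_derivative_minus[OF D]] f
    by (simp add: concave_on_def)
  then show "\<forall>y\<in>S. f y \<le> f x"
    using nonpos by fastforce
qed

lemma strictly_concave_on_maximizer_unique:
  assumes f: "strictly_concave_on S f" and "x \<in> S" "y \<in> S"
    and "\<forall>z\<in>S. f z \<le> f x" "\<forall>z\<in>S. f z \<le> f y"
  shows "x = y"
proof (rule ccontr)
  assume "x \<noteq> y"
  define m where "m = (1/2::real) *\<^sub>R x + (1/2::real) *\<^sub>R y"
  have "m \<in> S"
    using f assms(2,3) by (simp add: m_def strictly_concave_on_def strictly_convex_on_def convexD)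
  moreover have "(1 - 1/2) * f x + (1/2) * f y < f m"
    using strictly_concave_onD[OF f assms(2,3) \<open>x \<noteq> y\<close>, of "1/2"] by (simp add: m_def)
  ultimately show False
    using assms(4,5) by fastforce
qed

lemma DERIV_compose_within:
  fixes f g :: "real \<Rightarrow> real"
  assumes f: "(f has_real_derivative Df) (at (g x) within T)"
    and g: "(g has_real_derivative Dg) (at x within S)" and "g ` S \<subseteq> T"
  shows "((\<lambda>y. f (g y)) has_real_derivative Df * Dg) (at x within S)"
  using DERIV_image_chain[OF DERIV_subset[OF f \<open>g ` S \<subseteq> T\<close>] g] by (simp add: o_def)

lemma mvt_within_convex:
  fixes f f' :: "real \<Rightarrow> real"
  assumes A: "convex A" "a \<in> A" "b \<in> A" "a < b"
    and f: "\<And>x. x \<in> A \<Longrightarrow> (f has_real_derivative f' x) (at x within A)"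
  shows "\<exists>\<xi>\<in>{a<..<b}. f b - f a = f' \<xi> * (b - a)"
proof -
  have "{a..b} \<subseteq> A"
    using connected_contains_Icc[OF convex_connected[OF A(1)]] A(2,3) by simp
  have "(f has_derivative (*) (f' \<xi>)) (at \<xi> within {a..b})" if "a \<le> \<xi>" "\<xi> \<le> b" for \<xi>
  proof (rule has_derivative_subset)
    show "(f has_derivative (*) (f' \<xi>)) (at \<xi> within A)"
      using f[of \<xi>] that \<open>{a..b} \<subseteq> A\<close> by (auto simp: has_field_derivative_def)
  qed fact
  from mvt_simple[OF \<open>a < b\<close> this] show ?thesis
    by simp
qed

lemma concave_on_real_if_derivative_antimono:
  fixes f f' :: "real \<Rightarrow> real"
  assumes A: "convex A"
    and f: "\<And>x. x \<in> A \<Longrightarrow> (f has_real_derivative f' x) (at x within A)"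
    and antimono: "\<And>x y. x \<in> A \<Longrightarrow> y \<in> A \<Longrightarrow> x \<le> y \<Longrightarrow> f' y \<le> f' x"
  shows "concave_on A f"
proof (rule concave_on_linorderI[OF _ A])
  fix t x y :: real
  assume t: "0 < t" "t < 1" and "x \<in> A" "y \<in> A" "x < y"
  define z where "z = (1 - t) * x + t * y"
  have zx: "z - x = t * (y - x)" and yz: "y - z = (1 - t) * (y - x)"
    by (simp_all add: z_def algebra_simps)
  have "x < z"
    using zx t \<open>x < y\<close> by (smt (verit) mult_pos_pos)
  have "z < y"
    using yz t \<open>x < y\<close> by (smt (verit) mult_pos_pos)
  have "{x..y} \<subseteq> A"
    using connected_contains_Icc[OF convex_connected[OF A]] \<open>x \<in> A\<close> \<open>y \<in> A\<close> by simp
  then have "z \<in> A"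
    using \<open>x < z\<close> \<open>z < y\<close> by auto
  obtain \<xi> \<eta> where \<xi>: "\<xi> \<in> {x<..<z}" "f z - f x = f' \<xi> * (z - x)"
    and \<eta>: "\<eta> \<in> {z<..<y}" "f y - f z = f' \<eta> * (y - z)"
    using mvt_within_convex[OF A \<open>x \<in> A\<close> \<open>z \<in> A\<close> \<open>x < z\<close> f]
      mvt_within_convex[OF A \<open>z \<in> A\<close> \<open>y \<in> A\<close> \<open>z < y\<close> f] by blast
  have "\<xi> \<in> {x..y}" "\<eta> \<in> {x..y}"
    using \<xi>(1) \<eta>(1) \<open>x < z\<close> \<open>z < y\<close> by auto
  then have "f' \<eta> \<le> f' \<xi>"
    using \<open>{x..y} \<subseteq> A\<close> \<xi>(1) \<eta>(1) by (intro antimono) auto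
  then have "t * (1 - t) * (y - x) * f' \<eta> \<le> t * (1 - t) * (y - x) * f' \<xi>"
    using t \<open>x < y\<close> by (intro mult_left_mono) auto
  then have "t * (f y - f z) \<le> (1 - t) * (f z - f x)"
    unfolding \<xi>(2) \<eta>(2) zx yz by (simp add: algebra_simps)
  moreover have "f ((1 - t) *\<^sub>R x + t *\<^sub>R y) = f z"
    by (simp add: z_def)
  ultimately show "(1 - t) * f x + t * f y \<le> f ((1 - t) *\<^sub>R x + t *\<^sub>R y)"
    by (simp add: algebra_simps)
qed

section \<open>A single market\<close>

definition revenue :: "(real \<Rightarrow> real) \<Rightarrow> real \<Rightarrow> real \<Rightarrow> real" where
  "revenue u b a = u (a + b) / (a + b) * a"

definition price_integral :: "(real \<Rightarrow> real) \<Rightarrow> real \<Rightarrow> real" where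
  "price_integral u z = integral {0..z} (\<lambda>t. u t / t)"

definition potential_term :: "(real \<Rightarrow> real) \<Rightarrow> real \<Rightarrow> real \<Rightarrow> real" where
  "potential_term u N y = (1 - 1 / N) * price_integral u (N * y) + (1 / N) * u (N * y)"

locale concave_market =
  fixes u u' :: "real \<Rightarrow> real"
  assumes zero: "u 0 = 0"
    and concave: "concave_on {0..} u"
    and deriv: "\<And>t. 0 \<le> t \<Longrightarrow> (u has_real_derivative u' t) (at t within {0..})"
begin

lemma neg_has_derivative:
  "0 \<le> x \<Longrightarrow> ((\<lambda>t. - u t) has_derivative (\<lambda>h. - (u' x * h))) (at x within {0..})"
  using deriv[of x] by (auto simp: has_field_derivative_def intro!: derivative_eq_intros)

lemma below_tangent:
  assumes "0 \<le> x" "0 \<le> y"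
  shows "u y \<le> u x + u' x * (y - x)"
  using convex_on_above_derivative[of "{0..}" "\<lambda>t. - u t" x y, OF _ _ _ neg_has_derivative] assms concave
  by (simp add: concave_on_def)

lemma strictly_below_tangent:
  assumes "strictly_concave_on {0..} u" "0 \<le> x" "0 \<le> y" "x \<noteq> y"
  shows "u y < u x + u' x * (y - x)"
  using strictly_convex_on_above_derivative[of "{0..}" "\<lambda>t. - u t" x y, OF _ _ _ _ neg_has_derivative] assms
  by (simp add: strictly_concave_on_def)

lemma deriv_antimono:
  assumes "0 \<le> x" "x \<le> y"
  shows "u' y \<le> u' x"
proof -
  have "0 \<le> (u' x - u' y) * (y - x)"
    using below_tangent[of x y] below_tangent[of y x] assms by (simp add: algebra_simps)
  then show ?thesis
    using assms by (cases "x = y") (auto simp: zero_le_mult_iff)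
qed

text \<open>The price \<open>u t / t\<close>, extended continuously to \<open>t = 0\<close>.\<close>

definition unit_price :: "real \<Rightarrow> real" where
  "unit_price t = (if t = 0 then u' 0 else u t / t)"

lemma deriv_le_unit_price:
  assumes "0 \<le> t"
  shows "u' t \<le> unit_price t"
  using below_tangent[of t 0] assms by (auto simp: unit_price_def zero field_simps)

lemma deriv_less_unit_price:
  assumes "strictly_concave_on {0..} u" "0 < t"
  shows "u' t < unit_price t"
  using strictly_below_tangent[of t 0] assms by (auto simp: unit_price_def zero field_simps)

lemma unit_price_antimono:
  assumes "0 \<le> s" "s \<le> t"
  shows "unit_price t \<le> unit_price s"
proof (cases "s = 0")
  case True
  then show ?thesis
    using below_tangent[of 0 t] assms by (auto simp: unit_price_def zero divide_le_eq mult.commute)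
next
  case False
  have "(1 - s / t) * u 0 + (s / t) * u t \<le> u ((1 - s / t) *\<^sub>R 0 + (s / t) *\<^sub>R t)"
    using concave_onD[OF concave, of "s / t" 0 t] assms False by auto
  then have "s * (u t / t) \<le> u s"
    using assms False by (simp add: zero)
  then show ?thesis
    using assms False by (simp add: unit_price_def le_divide_eq mult.commute)
qed

lemma unit_price_continuous: "continuous_on {0..} unit_price"
  unfolding continuous_on_eq_continuous_within
proof
  fix t :: real assume "t \<in> {0..}"
  show "continuous (at t within {0..}) unit_price"
  proof (cases "t = 0")
    case True
    have "((\<lambda>y. u y / y) \<longlongrightarrow> u' 0) (at 0 within {0..})"
      using deriv[of 0] by (simp add: has_field_derivative_iff zero)
    then have "(unit_price \<longlongrightarrow> u' 0) (at 0 within {0..})"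
      by (rule Lim_transform_within[where d = 1]) (auto simp: unit_price_def)
    then show ?thesis
      using True by (simp add: continuous_within unit_price_def)
  next
    case False
    with \<open>t \<in> {0..}\<close> have "0 < t" by simp
    have "continuous (at t within {0..}) u"
      using DERIV_continuous[OF deriv] \<open>t \<in> {0..}\<close> by simp
    then have "continuous (at t within {0..}) (\<lambda>y. u y / y)"
      using \<open>0 < t\<close> by (intro continuous_intros) auto
    then have "((\<lambda>y. u y / y) \<longlongrightarrow> u t / t) (at t within {0..})"
      by (simp add: continuous_within)
    then have "(unit_price \<longlongrightarrow> u t / t) (at t within {0..})"
      by (rule Lim_transform_within[where d = t]) (use \<open>0 < t\<close> in \<open>auto simp: unit_price_def dist_real_def\<close>)
    then show ?thesis
      using False by (simp add: continuous_within unit_price_def)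
  qed
qed

lemma price_integral_has_derivative:
  assumes "0 \<le> z"
  shows "(price_integral u has_real_derivative unit_price z) (at z within {0..})"
proof -
  have "price_integral u = (\<lambda>x. integral {0..x} unit_price)"
    unfolding price_integral_def
    by (intro ext integral_spike[of "{0}"]) (auto simp: unit_price_def)
  moreover have "((\<lambda>x. integral {0..x} unit_price) has_real_derivative unit_price z) (at z within {0..z + 1})"
    using assms continuous_on_subset[OF unit_price_continuous]
    by (intro integral_has_real_derivative) auto
  moreover have "at z within {0..z + 1} = at z within {0..}"
    by (rule at_within_nhd[where S = "{..<z + 1}"]) auto
  ultimately show ?thesis
    by simp
qed

lemma price_integral_concave: "concave_on {0..} (price_integral u)"
  by (rule concave_on_real_if_derivative_antimono[OF _ price_integral_has_derivative unit_price_antimono])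
    auto

definition revenue_deriv :: "real \<Rightarrow> real \<Rightarrow> real" where
  "revenue_deriv b a =
     (if a + b = 0 then u' 0 else (b * unit_price (a + b) + a * u' (a + b)) / (a + b))"

lemma revenue_has_derivative:
  assumes a: "0 \<le> a" and b: "0 \<le> b"
  shows "(revenue u b has_real_derivative revenue_deriv b a) (at a within {0..})"
proof (cases "a + b = 0")
  case True
  then have "a = 0" "b = 0"
    using a b by auto
  moreover have "revenue u 0 = u"
    by (auto simp: revenue_def zero)
  ultimately show ?thesis
    using deriv[of 0] by (simp add: revenue_deriv_def)
next
  case False
  then have t: "0 < a + b"
    using a b by simp
  have "((\<lambda>y. u (y + b)) has_real_derivative u' (a + b) * 1) (at a within {0..})"
    by (rule DERIV_compose_within[OF deriv]) (use a b in \<open>auto intro!: derivative_eq_intros\<close>)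
  then have "((\<lambda>y. u (y + b) / (y + b) * y) has_real_derivative revenue_deriv b a) (at a within {0..})"
    using t by (auto intro!: derivative_eq_intros simp: revenue_deriv_def unit_price_def field_simps)
  then show ?thesis
    by (simp add: revenue_def[abs_def])
qed

lemma revenue_deriv_antimono:
  assumes b: "0 \<le> b" and a1: "0 \<le> a1" and "a1 \<le> a2"
  shows "revenue_deriv b a2 \<le> revenue_deriv b a1"
proof (cases "a1 + b = 0")
  case True
  then have "a1 = 0" "b = 0"
    using a1 b by auto
  then show ?thesis
    using deriv_antimono[of 0 a2] \<open>a1 \<le> a2\<close> by (cases "a2 = 0") (auto simp: revenue_deriv_def)
next
  case False
  define t1 t2 where "t1 = a1 + b" and "t2 = a2 + b"
  have "0 < t1" "t1 \<le> t2"
    using False a1 b \<open>a1 \<le> a2\<close> by (auto simp: t1_def t2_def)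
  then have "0 < t2"
    by simp
  have p: "unit_price t2 \<le> unit_price t1" and d: "u' t2 \<le> u' t1" and dp: "u' t2 \<le> unit_price t2"
    using unit_price_antimono deriv_antimono deriv_le_unit_price \<open>0 < t1\<close> \<open>t1 \<le> t2\<close> by auto
  have "revenue_deriv b a2 = (b * unit_price t2 + a2 * u' t2) / t2"
    using \<open>0 < t2\<close> by (simp add: revenue_deriv_def t2_def)
  also have "\<dots> \<le> (b * unit_price t2 + a1 * u' t2) / t1"
  proof -
    have "(b * unit_price t2 + a1 * u' t2) * t2 - (b * unit_price t2 + a2 * u' t2) * t1
        = b * (a2 - a1) * (unit_price t2 - u' t2)"
      by (simp add: t1_def t2_def algebra_simps)
    also have "\<dots> \<ge> 0"
      using b \<open>a1 \<le> a2\<close> dp by simp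
    finally show ?thesis
      using \<open>0 < t1\<close> \<open>0 < t2\<close> by (simp add: divide_simps)
  qed
  also have "\<dots> \<le> (b * unit_price t1 + a1 * u' t1) / t1"
    using p d a1 b \<open>0 < t1\<close> by (intro divide_right_mono add_mono mult_left_mono) auto
  also have "\<dots> = revenue_deriv b a1"
    using \<open>0 < t1\<close> by (simp add: revenue_deriv_def t1_def)
  finally show ?thesis .
qed

lemma revenue_concave: "0 \<le> b \<Longrightarrow> concave_on {0..} (revenue u b)"
  by (rule concave_on_real_if_derivative_antimono[OF _ revenue_has_derivative revenue_deriv_antimono])
    auto

text \<open>The first-order terms of two firms supplying \<open>A\<close> and \<open>B\<close> to a market of total supply \<open>s\<close>,
  each evaluated in the direction of the other's supply.\<close>

lemma revenue_deriv_exchange_eq: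
  assumes "0 < s"
  shows "revenue_deriv (s - A) A * (B - A) + revenue_deriv (s - B) B * (A - B)
    = (A - B)\<^sup>2 * (unit_price s - u' s) / s"
  using assms by (simp add: revenue_deriv_def field_simps power2_eq_square)

lemma revenue_deriv_exchange_nonneg:
  assumes "0 \<le> A" "0 \<le> B" "A + B \<le> s"
  shows "0 \<le> revenue_deriv (s - A) A * (B - A) + revenue_deriv (s - B) B * (A - B)"
proof (cases "s = 0")
  case True
  with assms have "A = 0" "B = 0"
    by auto
  then show ?thesis
    by simp
next
  case False
  then have "0 < s"
    using assms by simp
  then show ?thesis
    using deriv_le_unit_price[of s] by (simp add: revenue_deriv_exchange_eq)
qed

lemma revenue_deriv_exchange_eq_0:
  assumes "strictly_concave_on {0..} u" "0 \<le> A" "0 \<le> B" "A + B \<le> s"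
    and "revenue_deriv (s - A) A * (B - A) + revenue_deriv (s - B) B * (A - B) = 0"
  shows "A = B"
proof (cases "s = 0")
  case False
  then have "0 < s"
    using assms by simp
  then have "0 < (unit_price s - u' s) / s"
    using deriv_less_unit_price[OF assms(1)] by simp
  then show ?thesis
    using assms(5) revenue_deriv_exchange_eq[OF \<open>0 < s\<close>, of A B] by auto
qed (use assms in linarith)

lemma potential_term_has_derivative:
  assumes "1 \<le> N" "0 \<le> y"
  shows "(potential_term u N has_real_derivative (N - 1) * unit_price (N * y) + u' (N * y))
    (at y within {0..})"
proof -
  have scale: "((*) N has_real_derivative N) (at y within {0..})" "(*) N ` {0..} \<subseteq> {0..}"
    using assms by (auto intro!: derivative_eq_intros)
  have "((\<lambda>y. price_integral u (N * y)) has_real_derivative unit_price (N * y) * N) (at y within {0..})"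
    using DERIV_compose_within[OF price_integral_has_derivative scale] assms by simp
  moreover have "((\<lambda>y. u (N * y)) has_real_derivative u' (N * y) * N) (at y within {0..})"
    using DERIV_compose_within[OF deriv scale] assms by simp
  ultimately show ?thesis
    unfolding potential_term_def[abs_def] using assms
    by (auto intro!: derivative_eq_intros simp: field_simps)
qed

text \<open>This identity is what makes the potential a potential: its derivative is \<open>N\<close> times the
  marginal revenue of one of \<open>N\<close> firms that each supply \<open>y\<close>.\<close>

lemma potential_term_deriv_eq:
  assumes "1 \<le> N" "0 \<le> y"
  shows "(N - 1) * unit_price (N * y) + u' (N * y) = N * revenue_deriv ((N - 1) * y) y"
proof (cases "y = 0")
  case False
  then have "0 < N * y"
    using assms by simp
  then show ?thesis
    using assms by (simp add: revenue_deriv_def unit_price_def field_simps)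
qed (simp add: revenue_deriv_def unit_price_def algebra_simps)

lemma potential_term_concave:
  assumes "1 \<le> N"
  shows "concave_on {0..} (potential_term u N)"
proof (rule concave_on_real_if_derivative_antimono[OF _ potential_term_has_derivative[OF assms]])
  fix x y :: real assume "x \<in> {0..}" "y \<in> {0..}" "x \<le> y"
  then have "unit_price (N * y) \<le> unit_price (N * x)" "u' (N * y) \<le> u' (N * x)"
    using assms unit_price_antimono deriv_antimono by (simp_all add: mult_left_mono)
  then show "(N - 1) * unit_price (N * y) + u' (N * y) \<le> (N - 1) * unit_price (N * x) + u' (N * x)"
    using assms by (intro add_mono mult_left_mono) auto
qed auto

lemma potential_term_strictly_concave:
  assumes strict: "strictly_concave_on {0..} u" and "1 \<le> N"
  shows "strictly_concave_on {0..} (potential_term u N)"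
proof (rule strictly_concave_onI)
  fix x y t :: real
  assume "x \<in> {0..}" "y \<in> {0..}" "x \<noteq> y" and t: "0 < t" "t < 1"
  define z where "z = (1 - t) *\<^sub>R (N * x) + t *\<^sub>R (N * y)"
  have z: "N * ((1 - t) *\<^sub>R x + t *\<^sub>R y) = z"
    by (simp add: z_def algebra_simps)
  have "(1 - t) * price_integral u (N * x) + t * price_integral u (N * y) \<le> price_integral u z"
    unfolding z_def using \<open>x \<in> {0..}\<close> \<open>y \<in> {0..}\<close> t \<open>1 \<le> N\<close>
    by (intro concave_onD[OF price_integral_concave]) auto
  then have "(1 - 1 / N) * ((1 - t) * price_integral u (N * x) + t * price_integral u (N * y))
      \<le> (1 - 1 / N) * price_integral u z"
    using \<open>1 \<le> N\<close> by (intro mult_left_mono) (auto simp: field_simps)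
  moreover have "(1 - t) * u (N * x) + t * u (N * y) < u z"
    unfolding z_def using \<open>x \<in> {0..}\<close> \<open>y \<in> {0..}\<close> \<open>x \<noteq> y\<close> t \<open>1 \<le> N\<close>
    by (intro strictly_concave_onD[OF strict]) auto
  then have "(1 / N) * ((1 - t) * u (N * x) + t * u (N * y)) < (1 / N) * u z"
    using \<open>1 \<le> N\<close> by (intro mult_strict_left_mono) auto
  moreover have "potential_term u N ((1 - t) *\<^sub>R x + t *\<^sub>R y)
      = (1 - 1 / N) * price_integral u z + (1 / N) * u z"
    by (simp only: potential_term_def z)
  moreover have "(1 - t) * potential_term u N x + t * potential_term u N y
      = (1 - 1 / N) * ((1 - t) * price_integral u (N * x) + t * price_integral u (N * y))
        + (1 / N) * ((1 - t) * u (N * x) + t * u (N * y))"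
    by (simp add: potential_term_def algebra_simps diff_divide_distrib)
  ultimately show "(1 - t) * potential_term u N x + t * potential_term u N y
      < potential_term u N ((1 - t) *\<^sub>R x + t *\<^sub>R y)"
    by linarith
qed simp

end

section \<open>Separable functions on the simplex\<close>

lemma unit_simplex_nonneg: "v \<in> unit_simplex \<Longrightarrow> 0 \<le> v $ x"
  by (simp add: unit_simplex_def)

lemma unit_simplex_subset_nonneg: "unit_simplex \<subseteq> {z. \<forall>x. 0 \<le> z $ x}"
  by (auto simp: unit_simplex_def)

lemma convex_unit_simplex: "convex unit_simplex"
  unfolding convex_def unit_simplex_def
  by (auto simp: sum.distrib sum_distrib_left[symmetric])

lemma compact_unit_simplex: "compact (unit_simplex :: (real^'e::finite) set)"
  unfolding compact_eq_bounded_closed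
proof
  show "bounded (unit_simplex :: (real^'e) set)"
    unfolding bounded_iff
  proof (intro exI ballI)
    fix v :: "real^'e" assume v: "v \<in> unit_simplex"
    have "norm v \<le> (\<Sum>x\<in>UNIV. \<bar>v $ x\<bar>)"
      by (rule norm_le_l1_cart)
    also have "\<dots> = 1"
      using v by (simp add: unit_simplex_def)
    finally show "norm v \<le> 1" .
  qed
  have "unit_simplex = (\<Inter>x. {v::real^'e. 0 \<le> v $ x}) \<inter> {v. (\<Sum>x\<in>UNIV. v $ x) = 1}"
    by (auto simp: unit_simplex_def)
  moreover have "closed (\<Inter>x. {v::real^'e. 0 \<le> v $ x})"
    by (intro closed_INT ballI closed_Collect_le continuous_intros)
  moreover have "closed {v::real^'e. (\<Sum>x\<in>UNIV. v $ x) = 1}"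
    by (intro closed_Collect_eq continuous_intros)
  ultimately show "closed (unit_simplex :: (real^'e) set)"
    by (metis closed_Int)
qed

lemma unit_simplex_nonempty: "(\<chi> x. 1 / real CARD('e::finite)) \<in> (unit_simplex :: (real^'e) set)"
  by (simp add: unit_simplex_def)

lemma unit_simplex_eqI:
  assumes "A \<in> unit_simplex" "B \<in> unit_simplex" "card T \<le> 1"
    and eq: "\<And>x. x \<notin> T \<Longrightarrow> A $ x = B $ x"
  shows "A = B"
proof (rule ccontr)
  assume "A \<noteq> B"
  then obtain x0 where x0: "A $ x0 \<noteq> B $ x0"
    by (auto simp: vec_eq_iff)
  then have "T = {x0}"
    using eq \<open>card T \<le> 1\<close> by (auto simp: card_le_Suc0_iff_eq)
  then have "(\<Sum>x\<in>UNIV - {x0}. A $ x) = (\<Sum>x\<in>UNIV - {x0}. B $ x)"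
    using eq by (intro sum.cong) auto
  then have "A $ x0 = B $ x0"
    using assms(1,2) by (simp add: unit_simplex_def sum.remove[of UNIV x0])
  with x0 show False ..
qed

lemma scaled_simplex_iff:
  assumes "1 \<le> n"
  shows "s \<in> scaled_simplex n \<longleftrightarrow> (1 / real n) *\<^sub>R s \<in> unit_simplex"
  using assms by (auto simp: scaled_simplex_def unit_simplex_def sum_divide_distrib[symmetric] field_simps)

lemma concave_on_separable:
  fixes k :: "'e::finite \<Rightarrow> real \<Rightarrow> real"
  assumes S: "convex S" "S \<subseteq> {z. \<forall>x. 0 \<le> z $ x}"
    and k: "\<And>x. concave_on {0..} (k x)" and c: "convex_on S c" and "0 \<le> \<alpha>"
  shows "concave_on S (\<lambda>z. (\<Sum>x\<in>UNIV. k x (z $ x)) - \<alpha> * c z)"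
proof (rule concave_on_diff)
  show "convex_on S (\<lambda>z. \<alpha> * c z)"
    using \<open>0 \<le> \<alpha>\<close> c by (rule convex_on_cmul)
  show "concave_on S (\<lambda>z. \<Sum>x\<in>UNIV. k x (z $ x))"
    unfolding concave_on_def
  proof (rule convex_onI[OF _ S(1)])
    fix z1 z2 and t :: real
    assume "0 < t" "t < 1" "z1 \<in> S" "z2 \<in> S"
    then have "(1 - t) * k x (z1 $ x) + t * k x (z2 $ x) \<le> k x (((1 - t) *\<^sub>R z1 + t *\<^sub>R z2) $ x)" for x
      using concave_onD[OF k, of t "z1 $ x" "z2 $ x" x] S(2) by auto
    then have "(1 - t) * (\<Sum>x\<in>UNIV. k x (z1 $ x)) + t * (\<Sum>x\<in>UNIV. k x (z2 $ x))
        \<le> (\<Sum>x\<in>UNIV. k x (((1 - t) *\<^sub>R z1 + t *\<^sub>R z2) $ x))"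
      by (simp add: sum_distrib_left sum.distrib[symmetric] sum_mono)
    then show "- (\<Sum>x\<in>UNIV. k x (((1 - t) *\<^sub>R z1 + t *\<^sub>R z2) $ x))
        \<le> (1 - t) * - (\<Sum>x\<in>UNIV. k x (z1 $ x)) + t * - (\<Sum>x\<in>UNIV. k x (z2 $ x))"
      by simp
  qed
qed

lemma strictly_concave_on_separable:
  fixes k :: "'e::finite \<Rightarrow> real \<Rightarrow> real"
  assumes S: "convex S" "S \<subseteq> unit_simplex"
    and k: "\<And>x. concave_on {0..} (k x)" and c: "convex_on S c" and "0 < \<alpha>"
    and strict: "card {x. \<not> strictly_concave_on {0..} (k x)} \<le> 1 \<or> strictly_convex_on S c"
  shows "strictly_concave_on S (\<lambda>z. (\<Sum>x\<in>UNIV. k x (z $ x)) - \<alpha> * c z)"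
proof (rule strictly_concave_onI[OF S(1)])
  fix z1 z2 and t :: real
  assume z: "z1 \<in> S" "z2 \<in> S" "z1 \<noteq> z2" and t: "0 < t" "t < 1"
  define z where "z = (1 - t) *\<^sub>R z1 + t *\<^sub>R z2"
  have nonneg: "0 \<le> w $ x" if "w \<in> S" for w x
    using that S(2) unit_simplex_nonneg by blast
  have coord: "(1 - t) * k x (z1 $ x) + t * k x (z2 $ x) \<le> k x (z $ x)" for x
    using concave_onD[OF k, of t "z1 $ x" "z2 $ x" x] nonneg z t by (auto simp: z_def)
  have cost: "c z \<le> (1 - t) * c z1 + t * c z2"
    using convex_onD[OF c, of t z1 z2] z t by (simp add: z_def)
  have "(\<Sum>x\<in>UNIV. (1 - t) * k x (z1 $ x) + t * k x (z2 $ x)) - \<alpha> * ((1 - t) * c z1 + t * c z2)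
      < (\<Sum>x\<in>UNIV. k x (z $ x)) - \<alpha> * c z"
    using strict
  proof
    assume "card {x. \<not> strictly_concave_on {0..} (k x)} \<le> 1"
    then obtain x0 where x0: "strictly_concave_on {0..} (k x0)" "z1 $ x0 \<noteq> z2 $ x0"
      using unit_simplex_eqI[of z1 z2] S(2) z by blast
    have "(1 - t) * k x0 (z1 $ x0) + t * k x0 (z2 $ x0) < k x0 (z $ x0)"
      using strictly_concave_onD[OF x0(1), of "z1 $ x0" "z2 $ x0" t] x0(2) nonneg z t
      by (simp add: z_def)
    then have "(\<Sum>x\<in>UNIV. (1 - t) * k x (z1 $ x) + t * k x (z2 $ x)) < (\<Sum>x\<in>UNIV. k x (z $ x))"
      using coord by (intro sum_strict_mono_ex1) auto
    with cost \<open>0 < \<alpha>\<close> show ?thesis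
      by (smt (verit) mult_left_mono)
  next
    assume "strictly_convex_on S c"
    then have "\<alpha> * c z < \<alpha> * ((1 - t) * c z1 + t * c z2)"
      using strictly_convex_onD[of S c z1 z2 t] z t \<open>0 < \<alpha>\<close> by (simp add: z_def)
    moreover have "(\<Sum>x\<in>UNIV. (1 - t) * k x (z1 $ x) + t * k x (z2 $ x)) \<le> (\<Sum>x\<in>UNIV. k x (z $ x))"
      using coord by (intro sum_mono)
    ultimately show ?thesis
      by simp
  qed
  moreover have "(1 - t) * ((\<Sum>x\<in>UNIV. k x (z1 $ x)) - \<alpha> * c z1) + t * ((\<Sum>x\<in>UNIV. k x (z2 $ x)) - \<alpha> * c z2)
      = (\<Sum>x\<in>UNIV. (1 - t) * k x (z1 $ x) + t * k x (z2 $ x)) - \<alpha> * ((1 - t) * c z1 + t * c z2)"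
    by (simp add: sum.distrib sum_distrib_left right_diff_distrib distrib_left mult_ac)
  ultimately show "(1 - t) * ((\<Sum>x\<in>UNIV. k x (z1 $ x)) - \<alpha> * c z1) + t * ((\<Sum>x\<in>UNIV. k x (z2 $ x)) - \<alpha> * c z2)
      < (\<Sum>x\<in>UNIV. k x (((1 - t) *\<^sub>R z1 + t *\<^sub>R z2) $ x)) - \<alpha> * c ((1 - t) *\<^sub>R z1 + t *\<^sub>R z2)"
    by (simp add: z_def)
qed

lemma has_derivative_separable:
  fixes k :: "'e::finite \<Rightarrow> real \<Rightarrow> real" and k' :: "'e \<Rightarrow> real"
  assumes S: "S \<subseteq> {z. \<forall>x. 0 \<le> z $ x}"
    and k: "\<And>x. (k x has_real_derivative k' x) (at (v $ x) within {0..})"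
    and c: "(c has_derivative Dc) (at v within S)"
  shows "((\<lambda>z. (\<Sum>x\<in>UNIV. k x (z $ x)) - \<alpha> * c z)
    has_derivative (\<lambda>d. (\<Sum>x\<in>UNIV. k' x * d $ x) - \<alpha> * Dc d)) (at v within S)"
proof -
  have "((\<lambda>z. k x (z $ x)) has_derivative (\<lambda>d. k' x * d $ x)) (at v within S)" for x
  proof -
    have "(\<lambda>z. z $ x) ` S \<subseteq> {0..}"
      using S by auto
    then have "(k x has_derivative (*) (k' x)) (at (v $ x) within (\<lambda>z. z $ x) ` S)"
      using has_derivative_subset[OF k[of x, unfolded has_field_derivative_def]] by simp
    with bounded_linear_imp_has_derivative[OF bounded_linear_vec_nth]
    show ?thesis
      by (rule has_derivative_in_compose)
  qed
  then show ?thesis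
    by (intro has_derivative_diff has_derivative_sum has_derivative_mult_right c)
qed

section \<open>The oligopoly game\<close>

lemma aggregate_fun_upd:
  assumes "i \<in> {1..n}"
  shows "aggregate n (S(i := w)) = aggregate n S - S i + w"
proof -
  have "aggregate n (S(i := w)) = w + (\<Sum>k\<in>{1..n} - {i}. S k)"
    unfolding aggregate_def using assms by (simp add: sum.remove)
  moreover have "aggregate n S = S i + (\<Sum>k\<in>{1..n} - {i}. S k)"
    unfolding aggregate_def using assms by (simp add: sum.remove)
  ultimately show ?thesis
    by (simp add: algebra_simps)
qed

lemma payoff_fun_upd:
  assumes "i \<in> {1..n}"
  shows "payoff u c n (S(i := w)) i = (\<Sum>x\<in>UNIV. revenue (u x) ((aggregate n S - S i) $ x) (w $ x)) - c w"
  unfolding payoff_def aggregate_fun_upd[OF assms] price_def revenue_def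
  by (simp add: algebra_simps)

lemma aggregate_component: "aggregate n S $ x = (\<Sum>k\<in>{1..n}. S k $ x)"
  unfolding aggregate_def by (simp add: sum_component)

lemma aggregate_minus_nonneg:
  assumes "\<forall>k\<in>{1..n}. S k \<in> unit_simplex" "i \<in> {1..n}"
  shows "0 \<le> (aggregate n S - S i) $ x"
  using assms by (auto simp: aggregate_component intro!: member_le_sum unit_simplex_nonneg)

lemma aggregate_ge_pair:
  assumes "\<forall>k\<in>{1..n}. S k \<in> unit_simplex" "i \<in> {1..n}" "j \<in> {1..n}" "i \<noteq> j"
  shows "S i $ x + S j $ x \<le> aggregate n S $ x"
proof -
  have "(\<Sum>k\<in>{i, j}. S k $ x) \<le> (\<Sum>k\<in>{1..n}. S k $ x)"
    using assms by (intro sum_mono2) (auto intro: unit_simplex_nonneg)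
  then show ?thesis
    using assms(4) by (simp add: aggregate_component)
qed

lemma aggregate_const:
  assumes "\<And>k. k \<in> {1..n} \<Longrightarrow> S k = v"
  shows "aggregate n S = real n *\<^sub>R v"
proof -
  have "aggregate n S = (\<Sum>k\<in>{1..n}. v)"
    unfolding aggregate_def using assms by (rule sum.cong[OF refl])
  then show ?thesis
    by (simp only: sum_constant_scaleR) simp
qed

locale oligopoly =
  fixes u u' :: "'e::finite \<Rightarrow> real \<Rightarrow> real" and c :: "real^'e \<Rightarrow> real" and n :: nat
  assumes n_pos: "1 \<le> n"
    and market: "\<And>x. concave_market (u x) (u' x)"
    and c_convex: "convex_on unit_simplex c"
    and c_diff: "\<And>s. s \<in> unit_simplex \<Longrightarrow> c differentiable (at s within unit_simplex)"
begin

abbreviation marginal_revenue :: "'e \<Rightarrow> real \<Rightarrow> real \<Rightarrow> real" where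
  "marginal_revenue x \<equiv> concave_market.revenue_deriv (u x) (u' x)"

definition deviation_payoff :: "real^'e \<Rightarrow> real^'e \<Rightarrow> real" where
  "deviation_payoff v w = (\<Sum>x\<in>UNIV. revenue (u x) ((real n - 1) * v $ x) (w $ x)) - c w"

definition symmetric_potential :: "real^'e \<Rightarrow> real" where
  "symmetric_potential v = potential u c n (real n *\<^sub>R v)"

lemma symmetric_potential_eq:
  "symmetric_potential v = (\<Sum>x\<in>UNIV. potential_term (u x) (real n) (v $ x)) - real n * c v"
  using n_pos by (simp add: symmetric_potential_def potential_def potential_term_def price_integral_def)

lemma potential_eq_symmetric_potential: "potential u c n s = symmetric_potential ((1 / real n) *\<^sub>R s)"
  using n_pos by (simp add: symmetric_potential_def)

lemma pure_NE_first_order: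
  assumes NE: "is_pure_NE u c n S" and i: "i \<in> {1..n}" and B: "B \<in> unit_simplex"
    and Dc: "(c has_derivative Dc) (at (S i) within unit_simplex)"
  shows "(\<Sum>x\<in>UNIV. marginal_revenue x ((aggregate n S - S i) $ x) (S i $ x) * (B $ x - S i $ x))
    \<le> Dc (B - S i)"
proof -
  define b where "b = aggregate n S - S i"
  have profile: "\<forall>k\<in>{1..n}. S k \<in> unit_simplex"
    using NE by (simp add: is_pure_NE_def)
  then have Si: "S i \<in> unit_simplex"
    using i by blast
  have "0 \<le> b $ x" "0 \<le> S i $ x" for x
    using aggregate_minus_nonneg[OF profile i] unit_simplex_nonneg[OF Si] by (simp_all add: b_def)
  then have "((\<lambda>w. (\<Sum>x\<in>UNIV. revenue (u x) (b $ x) (w $ x)) - 1 * c w)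
      has_derivative (\<lambda>d. (\<Sum>x\<in>UNIV. marginal_revenue x (b $ x) (S i $ x) * d $ x) - 1 * Dc d))
      (at (S i) within unit_simplex)"
    by (intro has_derivative_separable[OF unit_simplex_subset_nonneg _ Dc]
        concave_market.revenue_has_derivative[OF market])
  moreover have "(\<Sum>x\<in>UNIV. revenue (u x) (b $ x) (w $ x)) - 1 * c w
      \<le> (\<Sum>x\<in>UNIV. revenue (u x) (b $ x) (S i $ x)) - 1 * c (S i)" if "w \<in> unit_simplex" for w
  proof -
    have "payoff u c n (S(i := w)) i \<le> payoff u c n (S(i := S i)) i"
      using NE i that by (simp add: is_pure_NE_def)
    then show ?thesis
      unfolding payoff_fun_upd[OF i] b_def by simp
  qed
  ultimately have "(\<Sum>x\<in>UNIV. marginal_revenue x (b $ x) (S i $ x) * (B - S i) $ x) - 1 * Dc (B - S i) \<le> 0"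
    by (rule has_derivative_maximum_imp_nonpos[OF convex_unit_simplex Si B])
  then show ?thesis
    by (simp add: b_def)
qed

definition exchange_gain :: "(nat \<Rightarrow> real^'e) \<Rightarrow> nat \<Rightarrow> nat \<Rightarrow> 'e \<Rightarrow> real" where
  "exchange_gain S i j x =
     marginal_revenue x ((aggregate n S - S i) $ x) (S i $ x) * (S j $ x - S i $ x)
     + marginal_revenue x ((aggregate n S - S j) $ x) (S j $ x) * (S i $ x - S j $ x)"

lemma exchange_gain_nonneg:
  assumes profile: "\<forall>k\<in>{1..n}. S k \<in> unit_simplex"
    and i: "i \<in> {1..n}" and j: "j \<in> {1..n}" and "i \<noteq> j"
  shows "0 \<le> exchange_gain S i j x"
proof -
  have "0 \<le> S i $ x" "0 \<le> S j $ x"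
    using unit_simplex_nonneg profile i j by blast+
  moreover have "S i $ x + S j $ x \<le> aggregate n S $ x"
    by (rule aggregate_ge_pair[OF profile i j \<open>i \<noteq> j\<close>])
  ultimately show ?thesis
    unfolding exchange_gain_def vector_minus_component
    by (rule concave_market.revenue_deriv_exchange_nonneg[OF market])
qed

lemma exchange_gain_eq_0:
  assumes profile: "\<forall>k\<in>{1..n}. S k \<in> unit_simplex"
    and i: "i \<in> {1..n}" and j: "j \<in> {1..n}" and "i \<noteq> j"
    and "strictly_concave_on {0..} (u x)" and "exchange_gain S i j x = 0"
  shows "S i $ x = S j $ x"
proof -
  have "0 \<le> S i $ x" "0 \<le> S j $ x"
    using unit_simplex_nonneg profile i j by blast+
  moreover have "S i $ x + S j $ x \<le> aggregate n S $ x"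
    by (rule aggregate_ge_pair[OF profile i j \<open>i \<noteq> j\<close>])
  moreover note \<open>exchange_gain S i j x = 0\<close>[unfolded exchange_gain_def vector_minus_component]
  ultimately show ?thesis
    by (rule concave_market.revenue_deriv_exchange_eq_0[OF market \<open>strictly_concave_on {0..} (u x)\<close>])
qed

lemma pure_NE_exchange_gain_sum:
  assumes NE: "is_pure_NE u c n S" and i: "i \<in> {1..n}" and j: "j \<in> {1..n}"
    and Di: "(c has_derivative Di) (at (S i) within unit_simplex)"
    and Dj: "(c has_derivative Dj) (at (S j) within unit_simplex)"
  shows "(\<Sum>x\<in>UNIV. exchange_gain S i j x) \<le> Di (S j - S i) + Dj (S i - S j)"
proof -
  have "S i \<in> unit_simplex" "S j \<in> unit_simplex"
    using NE i j by (simp_all add: is_pure_NE_def)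
  then show ?thesis
    using pure_NE_first_order[OF NE i _ Di, of "S j"] pure_NE_first_order[OF NE j _ Dj, of "S i"]
    by (simp add: exchange_gain_def sum.distrib)
qed

lemma pure_NE_symmetric:
  assumes strict: "card {x. \<not> strictly_concave_on {0..} (u x)} \<le> 1 \<or> strictly_convex_on unit_simplex c"
    and NE: "is_pure_NE u c n S" and i: "i \<in> {1..n}" and j: "j \<in> {1..n}"
  shows "S i = S j"
proof (rule ccontr)
  assume "S i \<noteq> S j"
  then have "i \<noteq> j"
    by auto
  have profile: "\<forall>k\<in>{1..n}. S k \<in> unit_simplex"
    using NE by (simp add: is_pure_NE_def)
  then have A: "S i \<in> unit_simplex" and B: "S j \<in> unit_simplex"
    using i j by simp_all
  obtain Di Dj where Di: "(c has_derivative Di) (at (S i) within unit_simplex)"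
    and Dj: "(c has_derivative Dj) (at (S j) within unit_simplex)"
    using c_diff[OF A] c_diff[OF B] by (auto simp: differentiable_def)
  have gains: "0 \<le> (\<Sum>x\<in>UNIV. exchange_gain S i j x)"
    using exchange_gain_nonneg[OF profile i j \<open>i \<noteq> j\<close>] by (simp add: sum_nonneg)
  have "(\<Sum>x\<in>UNIV. exchange_gain S i j x) \<le> Di (S j - S i) + Dj (S i - S j)"
    by (rule pure_NE_exchange_gain_sum[OF NE i j Di Dj])
  moreover have "c (S i) + Di (S j - S i) \<le> c (S j)" "c (S j) + Dj (S i - S j) \<le> c (S i)"
    using convex_on_above_derivative[OF c_convex] A B Di Dj by blast+
  ultimately show False
    using strict
  proof (elim disjE)
    assume "card {x. \<not> strictly_concave_on {0..} (u x)} \<le> 1"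
      "(\<Sum>x\<in>UNIV. exchange_gain S i j x) \<le> Di (S j - S i) + Dj (S i - S j)"
      "c (S i) + Di (S j - S i) \<le> c (S j)" "c (S j) + Dj (S i - S j) \<le> c (S i)"
    then have "(\<Sum>x\<in>UNIV. exchange_gain S i j x) = 0"
      using gains by linarith
    then have "\<forall>x\<in>UNIV. exchange_gain S i j x = 0"
      using sum_nonneg_eq_0_iff[of UNIV "exchange_gain S i j"]
        exchange_gain_nonneg[OF profile i j \<open>i \<noteq> j\<close>] by simp
    then have "S i $ x = S j $ x" if "x \<notin> {x. \<not> strictly_concave_on {0..} (u x)}" for x
      using exchange_gain_eq_0[OF profile i j \<open>i \<noteq> j\<close>] that by blast
    with unit_simplex_eqI[OF A B \<open>card _ \<le> 1\<close>] \<open>S i \<noteq> S j\<close> show False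
      by blast
  next
    assume "strictly_convex_on unit_simplex c"
      "(\<Sum>x\<in>UNIV. exchange_gain S i j x) \<le> Di (S j - S i) + Dj (S i - S j)"
      "c (S j) + Dj (S i - S j) \<le> c (S i)"
    moreover have "c (S i) + Di (S j - S i) < c (S j)"
      using strictly_convex_on_above_derivative[OF _ A B \<open>S i \<noteq> S j\<close> Di] \<open>strictly_convex_on _ c\<close> by blast
    ultimately show False
      using gains by linarith
  qed
qed

lemma symmetric_pure_NE_iff:
  assumes S_eq: "\<And>k. k \<in> {1..n} \<Longrightarrow> S k = v" and v: "v \<in> unit_simplex"
  shows "is_pure_NE u c n S \<longleftrightarrow> (\<forall>w\<in>unit_simplex. deviation_payoff v w \<le> deviation_payoff v v)"
proof -
  have "aggregate n S = real n *\<^sub>R v"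
    using S_eq by (rule aggregate_const)
  then have "payoff u c n (S(i := w)) i = deviation_payoff v w" if "i \<in> {1..n}" for i w
    unfolding payoff_fun_upd[OF that] S_eq[OF that]
    by (simp add: deviation_payoff_def algebra_simps)
  moreover have "1 \<in> {1..n}"
    using n_pos by simp
  ultimately show ?thesis
    using S_eq v unfolding is_pure_NE_def by (metis fun_upd_triv)
qed

lemma symmetric_potential_has_derivative:
  assumes v: "v \<in> unit_simplex" and Dc: "(c has_derivative Dc) (at v within unit_simplex)"
  shows "(symmetric_potential has_derivative
      (\<lambda>d. (\<Sum>x\<in>UNIV. (real n * marginal_revenue x ((real n - 1) * v $ x) (v $ x)) * d $ x) - real n * Dc d))
    (at v within unit_simplex)"
proof -
  have "(potential_term (u x) (real n) has_real_derivative
      real n * marginal_revenue x ((real n - 1) * v $ x) (v $ x)) (at (v $ x) within {0..})" for x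
    using concave_market.potential_term_has_derivative[OF market, of "real n" "v $ x" x]
      concave_market.potential_term_deriv_eq[OF market, of "real n" "v $ x" x]
      n_pos unit_simplex_nonneg[OF v]
    by simp
  from has_derivative_separable[OF unit_simplex_subset_nonneg this Dc]
  show ?thesis
    by (simp add: symmetric_potential_eq[abs_def])
qed

lemma deviation_maximum_iff_potential_maximum:
  assumes v: "v \<in> unit_simplex"
  shows "(\<forall>w\<in>unit_simplex. deviation_payoff v w \<le> deviation_payoff v v)
     \<longleftrightarrow> (\<forall>w\<in>unit_simplex. symmetric_potential w \<le> symmetric_potential v)"
proof -
  obtain Dc where Dc: "(c has_derivative Dc) (at v within unit_simplex)"
    using c_diff[OF v] by (auto simp: differentiable_def)
  define D where "D d = (\<Sum>x\<in>UNIV. marginal_revenue x ((real n - 1) * v $ x) (v $ x) * d $ x) - Dc d" for d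
  have nonneg: "0 \<le> (real n - 1) * v $ x" "0 \<le> v $ x" for x
    using n_pos unit_simplex_nonneg[OF v] by simp_all
  have "(revenue (u x) ((real n - 1) * v $ x) has_real_derivative
      marginal_revenue x ((real n - 1) * v $ x) (v $ x)) (at (v $ x) within {0..})" for x
    using concave_market.revenue_has_derivative[OF market nonneg(2,1)] .
  from has_derivative_separable[OF unit_simplex_subset_nonneg this Dc, where \<alpha> = 1]
  have dev_deriv: "(deviation_payoff v has_derivative D) (at v within unit_simplex)"
    by (simp add: deviation_payoff_def[abs_def] D_def[abs_def])
  have "concave_on {0..} (revenue (u x) ((real n - 1) * v $ x))" for x
    using concave_market.revenue_concave[OF market nonneg(1)] .
  from concave_on_separable[OF convex_unit_simplex unit_simplex_subset_nonneg this c_convex, where \<alpha> = 1]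
  have dev_concave: "concave_on unit_simplex (deviation_payoff v)"
    by (simp add: deviation_payoff_def[abs_def])
  have "(\<forall>w\<in>unit_simplex. deviation_payoff v w \<le> deviation_payoff v v)
      \<longleftrightarrow> (\<forall>w\<in>unit_simplex. D (w - v) \<le> 0)"
    by (rule concave_on_maximum_iff_derivative[OF dev_concave v dev_deriv])
  also have "\<dots> \<longleftrightarrow> (\<forall>w\<in>unit_simplex. real n * D (w - v) \<le> 0)"
    using n_pos by (simp add: mult_le_0_iff)
  also have "\<dots> \<longleftrightarrow> (\<forall>w\<in>unit_simplex. symmetric_potential w \<le> symmetric_potential v)"
  proof (rule concave_on_maximum_iff_derivative[symmetric, OF _ v])
    show "concave_on unit_simplex symmetric_potential"
      using concave_on_separable[OF convex_unit_simplex unit_simplex_subset_nonneg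
          concave_market.potential_term_concave[OF market] c_convex, where \<alpha> = "real n"] n_pos
      by (simp add: symmetric_potential_eq[abs_def])
    show "(symmetric_potential has_derivative (\<lambda>d. real n * D d)) (at v within unit_simplex)"
      using symmetric_potential_has_derivative[OF v Dc]
      by (simp add: D_def sum_distrib_left right_diff_distrib mult.assoc)
  qed
  finally show ?thesis .
qed

lemma symmetric_potential_continuous: "continuous_on unit_simplex symmetric_potential"
proof -
  have "continuous (at v within unit_simplex) symmetric_potential" if v: "v \<in> unit_simplex" for v
  proof -
    obtain Dc where "(c has_derivative Dc) (at v within unit_simplex)"
      using c_diff[OF v] by (auto simp: differentiable_def)
    from has_derivative_continuous[OF symmetric_potential_has_derivative[OF v this]]
    show ?thesis .
  qed
  then show ?thesis
    by (simp add: continuous_on_eq_continuous_within)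
qed

lemma symmetric_potential_strictly_concave:
  assumes strict: "card {x. \<not> strictly_concave_on {0..} (u x)} \<le> 1 \<or> strictly_convex_on unit_simplex c"
  shows "strictly_concave_on unit_simplex symmetric_potential"
proof -
  have "{x. \<not> strictly_concave_on {0..} (potential_term (u x) (real n))}
      \<subseteq> {x. \<not> strictly_concave_on {0..} (u x)}"
    using concave_market.potential_term_strictly_concave[OF market] n_pos by auto
  then have "card {x. \<not> strictly_concave_on {0..} (potential_term (u x) (real n))} \<le> 1
      \<or> strictly_convex_on unit_simplex c"
    using strict card_mono[OF finite] by (meson order_trans)
  from strictly_concave_on_separable[OF convex_unit_simplex order_refl
      concave_market.potential_term_concave[OF market] c_convex _ this] n_pos
  show ?thesis
    by (simp add: symmetric_potential_eq[abs_def])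
qed

lemma symmetric_potential_unique_maximizer:
  assumes strict: "card {x. \<not> strictly_concave_on {0..} (u x)} \<le> 1 \<or> strictly_convex_on unit_simplex c"
  obtains v where "v \<in> unit_simplex" "\<forall>w\<in>unit_simplex. symmetric_potential w \<le> symmetric_potential v"
    "\<And>w. w \<in> unit_simplex \<Longrightarrow> \<forall>z\<in>unit_simplex. symmetric_potential z \<le> symmetric_potential w \<Longrightarrow> w = v"
proof -
  obtain v where "v \<in> unit_simplex" "\<forall>w\<in>unit_simplex. symmetric_potential w \<le> symmetric_potential v"
    using continuous_attains_sup[OF compact_unit_simplex _ symmetric_potential_continuous]
      unit_simplex_nonempty by blast
  with strictly_concave_on_maximizer_unique[OF symmetric_potential_strictly_concave[OF strict]]
  show thesis
    using that by blast
qed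

lemma pure_NE_iff_potential_maximizer:
  assumes strict: "card {x. \<not> strictly_concave_on {0..} (u x)} \<le> 1 \<or> strictly_convex_on unit_simplex c"
  shows "is_pure_NE u c n S \<longleftrightarrow>
    (\<exists>v\<in>unit_simplex. (\<forall>w\<in>unit_simplex. symmetric_potential w \<le> symmetric_potential v)
                      \<and> (\<forall>k\<in>{1..n}. S k = v))"
proof
  assume NE: "is_pure_NE u c n S"
  have "1 \<in> {1..n}"
    using n_pos by simp
  then have "S k = S 1" if "k \<in> {1..n}" for k
    using pure_NE_symmetric[OF strict NE that] by blast
  moreover have "S 1 \<in> unit_simplex"
    using NE \<open>1 \<in> {1..n}\<close> by (simp add: is_pure_NE_def)
  ultimately show "\<exists>v\<in>unit_simplex. (\<forall>w\<in>unit_simplex. symmetric_potential w \<le> symmetric_potential v)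
      \<and> (\<forall>k\<in>{1..n}. S k = v)"
    using NE symmetric_pure_NE_iff deviation_maximum_iff_potential_maximum by blast
next
  assume "\<exists>v\<in>unit_simplex. (\<forall>w\<in>unit_simplex. symmetric_potential w \<le> symmetric_potential v)
      \<and> (\<forall>k\<in>{1..n}. S k = v)"
  then show "is_pure_NE u c n S"
    using symmetric_pure_NE_iff deviation_maximum_iff_potential_maximum by blast
qed

lemma pure_NE_iff_eq_potential_maximizer:
  assumes strict: "card {x. \<not> strictly_concave_on {0..} (u x)} \<le> 1 \<or> strictly_convex_on unit_simplex c"
  obtains v where "v \<in> unit_simplex" "\<forall>w\<in>unit_simplex. symmetric_potential w \<le> symmetric_potential v"
    "\<And>w. w \<in> unit_simplex \<Longrightarrow> \<forall>z\<in>unit_simplex. symmetric_potential z \<le> symmetric_potential w \<Longrightarrow> w = v"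
    "\<And>S. is_pure_NE u c n S \<longleftrightarrow> (\<forall>i\<in>{1..n}. S i = v)"
proof -
  obtain v where v: "v \<in> unit_simplex" and max: "\<forall>w\<in>unit_simplex. symmetric_potential w \<le> symmetric_potential v"
    and unique: "\<And>w. w \<in> unit_simplex \<Longrightarrow> \<forall>z\<in>unit_simplex. symmetric_potential z \<le> symmetric_potential w \<Longrightarrow> w = v"
    using symmetric_potential_unique_maximizer[OF strict] by blast
  have "is_pure_NE u c n S \<longleftrightarrow> (\<forall>i\<in>{1..n}. S i = v)" for S
    using pure_NE_iff_potential_maximizer[OF strict, of S] v max unique by (metis order_antisym)
  with v max unique show thesis
    using that by blast
qed

lemma potential_maximum_on_scaled_simplex:
  assumes max: "\<forall>w\<in>unit_simplex. symmetric_potential w \<le> symmetric_potential v"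
    and unique: "\<And>w. w \<in> unit_simplex \<Longrightarrow> \<forall>z\<in>unit_simplex. symmetric_potential z \<le> symmetric_potential w \<Longrightarrow> w = v"
    and s: "s \<in> scaled_simplex n"
  shows "potential u c n s \<le> potential u c n (real n *\<^sub>R v)
    \<and> (potential u c n s = potential u c n (real n *\<^sub>R v) \<longrightarrow> s = real n *\<^sub>R v)"
proof -
  define w where "w = (1 / real n) *\<^sub>R s"
  have "w \<in> unit_simplex"
    unfolding w_def using s scaled_simplex_iff[OF n_pos] by blast
  then have "symmetric_potential w \<le> symmetric_potential v"
    and "symmetric_potential w = symmetric_potential v \<Longrightarrow> w = v"
    using max unique[of w] by auto
  moreover have "s = real n *\<^sub>R w"
    using n_pos by (simp add: w_def)
  moreover have "potential u c n (real n *\<^sub>R v) = symmetric_potential v"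
    by (simp add: symmetric_potential_def)
  ultimately show ?thesis
    unfolding potential_eq_symmetric_potential[of s] w_def[symmetric] by auto
qed

end

theorem theorem1:
  fixes u :: "'e::finite \<Rightarrow> real \<Rightarrow> real"
    and c :: "real^'e \<Rightarrow> real"
    and n :: nat
  assumes n_pos: "1 \<le> n"
    and u_nonneg: "\<And>x t. 0 \<le> t \<Longrightarrow> 0 \<le> u x t"
    and u_zero: "\<And>x. u x 0 = 0"
    and u_concave: "\<And>x. concave_on {0..} (u x)"
    and u_diff: "\<And>x t. 0 \<le> t \<Longrightarrow> u x differentiable (at t within {0..})"
    and c_nonneg: "\<And>s. s \<in> unit_simplex \<Longrightarrow> 0 \<le> c s"
    and c_convex: "convex_on unit_simplex c"
    and c_diff: "\<And>s. s \<in> unit_simplex \<Longrightarrow> c differentiable (at s within unit_simplex)"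
    and strict: "card {x. \<not> strictly_concave_on {0..} (u x)} \<le> 1
                 \<or> strictly_convex_on unit_simplex c"
  shows "\<exists>S. is_pure_NE u c n S
           \<and> (\<forall>T. is_pure_NE u c n T \<longrightarrow> (\<forall>i\<in>{1..n}. T i = S i))
           \<and> (\<forall>i\<in>{1..n}. S i = (1 / real n) *\<^sub>R aggregate n S)
           \<and> aggregate n S \<in> scaled_simplex n
           \<and> (\<forall>s\<in>scaled_simplex n. potential u c n s \<le> potential u c n (aggregate n S))
           \<and> (\<forall>s\<in>scaled_simplex n.
                 potential u c n s = potential u c n (aggregate n S) \<longrightarrow> s = aggregate n S)"
proof -
  have "\<forall>x t. \<exists>D. 0 \<le> t \<longrightarrow> (u x has_real_derivative D) (at t within {0..})"
    using u_diff by (metis real_differentiable_def)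
  then obtain u' where u': "\<And>x t. 0 \<le> t \<Longrightarrow> (u x has_real_derivative u' x t) (at t within {0..})"
    by metis
  interpret oligopoly u u' c n
    by unfold_locales (use n_pos u_zero u_concave u' c_convex c_diff in \<open>auto intro: concave_market.intro\<close>)
  obtain v where v: "v \<in> unit_simplex" and max: "\<forall>w\<in>unit_simplex. symmetric_potential w \<le> symmetric_potential v"
    and unique: "\<And>w. w \<in> unit_simplex \<Longrightarrow> \<forall>z\<in>unit_simplex. symmetric_potential z \<le> symmetric_potential w \<Longrightarrow> w = v"
    and NE_iff: "\<And>S. is_pure_NE u c n S \<longleftrightarrow> (\<forall>i\<in>{1..n}. S i = v)"
    using pure_NE_iff_eq_potential_maximizer[OF strict] by blast
  define S :: "nat \<Rightarrow> real^'e" where "S = (\<lambda>_. v)"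
  have agg: "aggregate n S = real n *\<^sub>R v"
    by (simp add: S_def aggregate_const)
  have "is_pure_NE u c n S" and "\<forall>T. is_pure_NE u c n T \<longrightarrow> (\<forall>i\<in>{1..n}. T i = S i)"
    using NE_iff by (simp_all add: S_def)
  moreover have "\<forall>i\<in>{1..n}. S i = (1 / real n) *\<^sub>R aggregate n S"
    using n_pos unfolding agg by (simp add: S_def)
  moreover have "aggregate n S \<in> scaled_simplex n"
    unfolding agg scaled_simplex_iff[OF n_pos] using v n_pos by simp
  moreover have "\<forall>s\<in>scaled_simplex n. potential u c n s \<le> potential u c n (aggregate n S)
      \<and> (potential u c n s = potential u c n (aggregate n S) \<longrightarrow> s = aggregate n S)"
    unfolding agg using potential_maximum_on_scaled_simplex[OF max unique] by blast
  ultimately show ?thesis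
    by blast
qed

end
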